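(* Let $G$ be a totally disconnected locally compact group such that every proper commensurated open subgroup of $G$ is compact. Then every continuous homomorphism $\varphi:G\to H$, where $H$ is a totally disconnected locally compact group, has closed image.
   Context: A subgroup $U\leq G$ is commensurated if $gUg^{-1}\cap U$ has finite index in both $U$ and $gUg^{-1}$ for every $g\in G$. *)

theory Defs
  imports "HOL-Analysis.Analysis" "HOL-Algebra.Algebra"
begin

definition topological_group :: "('a, 'm) monoid_scheme \<Rightarrow> 'a topology \<Rightarrow> bool" where
  "topological_group G T \<longleftrightarrow> group G \<and> topspace T = carrier G
     \<and> continuous_map (prod_topology T T) T (\<lambda>(x, y). x \<otimes>\<^bsub>G\<^esub> y)
     \<and> continuous_map T T (\<lambda>x. inv\<^bsub>G\<^esub> x)"

definition totally_disconnected_space :: "'a topology \<Rightarrow> bool" where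
  "totally_disconnected_space T \<longleftrightarrow> (\<forall>S. connectedin T S \<longrightarrow> (\<exists>a. S \<subseteq> {a}))"

definition tdlc_group :: "('a, 'm) monoid_scheme \<Rightarrow> 'a topology \<Rightarrow> bool" where
  "tdlc_group G T \<longleftrightarrow> topological_group G T \<and> totally_disconnected_space T
     \<and> locally_compact_space T"

definition finite_index_in :: "('a, 'm) monoid_scheme \<Rightarrow> 'a set \<Rightarrow> 'a set \<Rightarrow> bool" where
  "finite_index_in G K U \<longleftrightarrow> finite ((\<lambda>x. x <#\<^bsub>G\<^esub> K) ` U)"

definition conj_set :: "('a, 'm) monoid_scheme \<Rightarrow> 'a \<Rightarrow> 'a set \<Rightarrow> 'a set" where
  "conj_set G g U = (\<lambda>u. g \<otimes>\<^bsub>G\<^esub> u \<otimes>\<^bsub>G\<^esub> inv\<^bsub>G\<^esub> g) ` U"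

definition commensurated :: "('a, 'm) monoid_scheme \<Rightarrow> 'a set \<Rightarrow> bool" where
  "commensurated G U \<longleftrightarrow> subgroup U G \<and>
     (\<forall>g \<in> carrier G. finite_index_in G (conj_set G g U \<inter> U) U
                    \<and> finite_index_in G (conj_set G g U \<inter> U) (conj_set G g U))"

end

theory Submission
  imports Defs
begin

text \<open>
  If \<open>\<phi>(G)\<close> lies in every compact open subgroup of \<open>H\<close>, it is trivial by van Dantzig's
  theorem. Otherwise choose a compact open subgroup \<open>V\<close> of \<open>H\<close> not containing \<open>\<phi>(G)\<close>.
  Compact open subgroups are commensurated and preimages of commensurated subgroups are
  commensurated, so \<open>\<phi>\<^sup>-\<^sup>1(V)\<close> is a proper open commensurated subgroup of \<open>G\<close>, hence compact.
  Then \<open>\<phi>(G) \<inter> V = \<phi>(\<phi>\<^sup>-\<^sup>1(V))\<close> is compact and so closed, and a subgroup meeting an open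
  subgroup in a closed set is closed.
\<close>

lemma topspace_topological_group: "topological_group G T \<Longrightarrow> topspace T = carrier G"
  by (simp add: topological_group_def)

lemma finite_image_if_finite_image_finer:
  assumes "\<And>x y. x \<in> A \<Longrightarrow> y \<in> A \<Longrightarrow> g x = g y \<Longrightarrow> f x = f y" and "finite (g ` A)"
  shows "finite (f ` A)"
proof -
  have "f x = f (inv_into A g (g x))" if "x \<in> A" for x
  proof (rule assms(1)[OF that])
    show "inv_into A g (g x) \<in> A" and "g x = g (inv_into A g (g x))"
      using that by (simp_all add: inv_into_into f_inv_into_f)
  qed
  then have "f ` A \<subseteq> (\<lambda>b. f (inv_into A g b)) ` g ` A"
    by blast
  then show ?thesis
    using assms(2) finite_subset by blast
qed

lemma connected_component_of_totally_disconnected: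
  assumes "totally_disconnected_space T" "x \<in> topspace T"
  shows "connected_component_of_set T x = {x}"
proof -
  obtain a where "connected_component_of_set T x \<subseteq> {a}"
    using assms(1) connectedin_connected_component_of unfolding totally_disconnected_space_def
    by metis
  moreover have "x \<in> connected_component_of_set T x"
    using assms(2) by (simp add: connected_component_of_refl)
  ultimately show ?thesis
    by blast
qed

context group
begin

lemma inv_mult_cancel_left [simp]: "x \<in> carrier G \<Longrightarrow> y \<in> carrier G \<Longrightarrow> inv x \<otimes> (x \<otimes> y) = y"
  by (metis inv_closed l_inv l_one m_assoc)

lemma mult_inv_cancel_left [simp]: "x \<in> carrier G \<Longrightarrow> y \<in> carrier G \<Longrightarrow> x \<otimes> (inv x \<otimes> y) = y"
  by (metis inv_closed r_inv l_one m_assoc)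

lemma continuous_map_mult_left:
  assumes "topological_group G T" "a \<in> carrier G"
  shows "continuous_map T T (\<lambda>x. a \<otimes> x)"
proof -
  have "continuous_map T (prod_topology T T) (\<lambda>x. (a, x))"
    using assms by (simp add: continuous_map_pairwise o_def topological_group_def)
  moreover have "continuous_map (prod_topology T T) T (\<lambda>(x, y). x \<otimes> y)"
    using assms(1) by (simp add: topological_group_def)
  ultimately show ?thesis
    using continuous_map_compose by (fastforce simp: o_def)
qed

lemma continuous_map_mult_right:
  assumes "topological_group G T" "b \<in> carrier G"
  shows "continuous_map T T (\<lambda>x. x \<otimes> b)"
proof -
  have "continuous_map T (prod_topology T T) (\<lambda>x. (x, b))"
    using assms by (simp add: continuous_map_pairwise o_def topological_group_def)
  moreover have "continuous_map (prod_topology T T) T (\<lambda>(x, y). x \<otimes> y)"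
    using assms(1) by (simp add: topological_group_def)
  ultimately show ?thesis
    using continuous_map_compose by (fastforce simp: o_def)
qed

lemma homeomorphic_map_translation:
  assumes "topological_group G T" "a \<in> carrier G" "b \<in> carrier G"
  shows "homeomorphic_map T T (\<lambda>x. a \<otimes> x \<otimes> b)"
proof -
  have cont: "continuous_map T T (\<lambda>x. c \<otimes> x \<otimes> d)" if "c \<in> carrier G" "d \<in> carrier G" for c d
    using continuous_map_compose[OF continuous_map_mult_left continuous_map_mult_right] assms(1) that
    by (simp add: o_def)
  have "homeomorphic_maps T T (\<lambda>x. a \<otimes> x \<otimes> b) (\<lambda>x. inv a \<otimes> x \<otimes> inv b)"
    unfolding homeomorphic_maps_def
    using assms cont topspace_topological_group[OF assms(1)] by (simp add: m_assoc)
  then show ?thesis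
    by (rule homeomorphic_maps_imp_map)
qed

lemma homeomorphic_map_mult_left:
  assumes "topological_group G T" "a \<in> carrier G"
  shows "homeomorphic_map T T (\<lambda>x. a \<otimes> x)"
  using homeomorphic_map_translation[OF assms one_closed]
  by (rule homeomorphic_map_eq) (simp add: topspace_topological_group[OF assms(1)] assms(2))

lemma openin_l_coset:
  assumes "topological_group G T" "a \<in> carrier G" "openin T S"
  shows "openin T (a <#\<^bsub>G\<^esub> S)"
  using homeomorphic_map_openness[OF homeomorphic_map_mult_left[OF assms(1,2)] openin_subset[OF assms(3)]]
    assms(3) by (simp add: l_coset_def UNION_singleton_eq_range)

lemma closedin_l_coset:
  assumes "topological_group G T" "a \<in> carrier G" "closedin T S"
  shows "closedin T (a <#\<^bsub>G\<^esub> S)"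
  using homeomorphic_map_closedness[OF homeomorphic_map_mult_left[OF assms(1,2)] closedin_subset[OF assms(3)]]
    assms(3) by (simp add: l_coset_def UNION_singleton_eq_range)

lemma openin_conj_set:
  assumes "topological_group G T" "g \<in> carrier G" "openin T S"
  shows "openin T (conj_set G g S)"
  using assms homeomorphic_map_openness[OF homeomorphic_map_translation, of T g "inv g" S]
    openin_subset[OF assms(3)]
  by (simp add: conj_set_def)

lemma compactin_conj_set:
  assumes "topological_group G T" "g \<in> carrier G" "compactin T S"
  shows "compactin T (conj_set G g S)"
  using assms homeomorphic_map_compactness[OF homeomorphic_map_translation, of T g "inv g" S]
    compactin_subset_topspace[OF assms(3)]
  by (simp add: conj_set_def)

lemma conjugation_hom: "g \<in> carrier G \<Longrightarrow> (\<lambda>x. g \<otimes> x \<otimes> inv g) \<in> hom G G"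
  by (rule homI) (simp_all add: m_assoc)

lemma subgroup_conj_set:
  assumes "subgroup V G" "g \<in> carrier G"
  shows "subgroup (conj_set G g V) G"
proof -
  have "group_hom G G (\<lambda>x. g \<otimes> x \<otimes> inv g)"
    using conjugation_hom[OF assms(2)] by (simp add: group_hom_def group_hom_axioms_def)
  then show ?thesis
    unfolding conj_set_def using assms(1) by (rule group_hom.subgroup_img_is_subgroup)
qed

lemma conj_set_eq:
  assumes "V \<subseteq> carrier G" "g \<in> carrier G"
  shows "conj_set G g V = {x \<in> carrier G. inv g \<otimes> x \<otimes> g \<in> V}"
proof -
  have "x = g \<otimes> (inv g \<otimes> x \<otimes> g) \<otimes> inv g" if "x \<in> carrier G" for x
    using that assms(2) by (simp add: m_assoc)
  moreover have "inv g \<otimes> (g \<otimes> v \<otimes> inv g) \<otimes> g = v" if "v \<in> carrier G" for v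
    using that assms(2) by (simp add: m_assoc)
  ultimately show ?thesis
    using assms unfolding conj_set_def by (auto simp: image_iff)
qed

lemma Hausdorff_space_if_tdlc_group:
  assumes "tdlc_group G T"
  shows "Hausdorff_space T"
proof -
  have tg: "topological_group G T" and td: "totally_disconnected_space T"
    using assms by (auto simp: tdlc_group_def)
  have tp: "topspace T = carrier G"
    using tg by (rule topspace_topological_group)
  have "closedin T {\<one>}"
    using closedin_connected_component_of[of T \<one>]
      connected_component_of_totally_disconnected[OF td] tp by simp
  moreover have "continuous_map (prod_topology T T) T (\<lambda>p. fst p \<otimes> inv (snd p))"
  proof -
    have "continuous_map T T (\<lambda>x. inv x)"
      using tg by (simp add: topological_group_def)
    from continuous_map_compose[OF continuous_map_snd this]
    have "continuous_map (prod_topology T T) (prod_topology T T) (\<lambda>p. (fst p, inv (snd p)))"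
      by (simp add: continuous_map_pairwise o_def continuous_map_fst)
    moreover have "continuous_map (prod_topology T T) T (\<lambda>(x, y). x \<otimes> y)"
      using tg by (simp add: topological_group_def)
    ultimately have "continuous_map (prod_topology T T) T
        ((\<lambda>(x, y). x \<otimes> y) \<circ> (\<lambda>p. (fst p, inv (snd p))))"
      by (rule continuous_map_compose)
    then show ?thesis
      by (simp add: o_def case_prod_beta)
  qed
  ultimately have "closedin (prod_topology T T)
      {p \<in> topspace (prod_topology T T). fst p \<otimes> inv (snd p) \<in> {\<one>}}"
    by (rule closedin_continuous_map_preimage[rotated])
  moreover have "{p \<in> topspace (prod_topology T T). fst p \<otimes> inv (snd p) \<in> {\<one>}}
      = (\<lambda>x. (x, x)) ` topspace T"
    using tp by (auto simp: inv_solve_right')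
  ultimately show ?thesis
    by (simp add: Hausdorff_space_closedin_diagonal)
qed

lemma compact_open_nbhd_if_tdlc_group:
  assumes "tdlc_group G T" "openin T W" "\<one> \<in> W"
  obtains U where "openin T U" "compactin T U" "\<one> \<in> U" "U \<subseteq> W"
proof -
  have lc: "locally_compact_space T" and td: "totally_disconnected_space T"
    using assms(1) by (simp_all add: tdlc_group_def)
  have one: "\<one> \<in> topspace T"
    using assms(1) topspace_topological_group[of G T] by (simp add: tdlc_group_def)
  obtain U0 K0 where U0: "openin T U0" "compactin T K0" "\<one> \<in> U0" "U0 \<subseteq> K0"
    using lc one unfolding locally_compact_space_def by blast
  have "connected_component_of_set T \<one> \<in> connected_components_of T"
    using one by (simp add: connected_components_of_def)
  then have "{\<one>} \<in> connected_components_of T"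
    by (simp add: connected_component_of_totally_disconnected[OF td one])
  then obtain U V where UV: "openin T U" "openin T V" "disjnt U V" "U \<union> V = topspace T"
      "{\<one>} \<subseteq> U" "U \<subseteq> W \<inter> U0"
    by (rule wilder_locally_compact_component_thm[OF lc Hausdorff_space_if_tdlc_group[OF assms(1)],
          of "{\<one>}" "W \<inter> U0"])
      (use one assms(2,3) U0(1,3) in auto)
  have "U = topspace T - V"
    using UV(3,4) by (auto simp: disjnt_def)
  then have "closedin T U"
    using UV(2) by (simp add: closedin_diff)
  then have "compactin T U"
    using closed_compactin[OF U0(2)] UV(6) U0(4) by blast
  with UV(1,5,6) that show ?thesis
    by blast
qed

lemma openin_subgroup_if_nbhd:
  assumes "topological_group G T" "subgroup V G" "openin T S" "\<one> \<in> S" "S \<subseteq> V"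
  shows "openin T V"
proof -
  have "V = (\<Union>v\<in>V. v <#\<^bsub>G\<^esub> S)"
  proof (intro subset_antisym subsetI)
    fix v assume v: "v \<in> V"
    then have "v = v \<otimes> \<one>"
      using subgroup.mem_carrier[OF assms(2)] by simp
    then show "v \<in> (\<Union>v\<in>V. v <#\<^bsub>G\<^esub> S)"
      using v assms(4) unfolding l_coset_def by blast
  next
    fix x assume "x \<in> (\<Union>v\<in>V. v <#\<^bsub>G\<^esub> S)"
    then obtain v s where "v \<in> V" "s \<in> S" "x = v \<otimes> s"
      unfolding l_coset_def by blast
    then show "x \<in> V"
      using subgroup.m_closed[OF assms(2)] assms(5) by blast
  qed
  moreover have "openin T (\<Union>v\<in>V. v <#\<^bsub>G\<^esub> S)"
    using openin_l_coset[OF assms(1) _ assms(3)] subgroup.mem_carrier[OF assms(2)]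
    by (intro openin_Union) blast
  ultimately show ?thesis
    by simp
qed

lemma closedin_open_subgroup:
  assumes "topological_group G T" "subgroup V G" "openin T V"
  shows "closedin T V"
proof -
  have tp: "topspace T = carrier G"
    using assms(1) by (rule topspace_topological_group)
  have "topspace T - V = (\<Union>a\<in>carrier G - V. a <#\<^bsub>G\<^esub> V)"
  proof (intro subset_antisym subsetI)
    fix x assume "x \<in> topspace T - V"
    then show "x \<in> (\<Union>a\<in>carrier G - V. a <#\<^bsub>G\<^esub> V)"
      using lcos_self[OF _ assms(2)] tp by blast
  next
    fix x assume "x \<in> (\<Union>a\<in>carrier G - V. a <#\<^bsub>G\<^esub> V)"
    then obtain a v where a: "a \<in> carrier G" "a \<notin> V" and v: "v \<in> V" "x = a \<otimes> v"
      unfolding l_coset_def by blast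
    have vG: "v \<in> carrier G"
      using v(1) subgroup.mem_carrier[OF assms(2)] by blast
    have "x \<notin> V"
    proof
      assume "x \<in> V"
      then have "x \<otimes> inv v \<in> V"
        using subgroup.m_closed[OF assms(2)] subgroup.m_inv_closed[OF assms(2) v(1)] by blast
      moreover have "x \<otimes> inv v = a"
        using v(2) vG a(1) by (simp add: m_assoc)
      ultimately show False
        using a(2) by simp
    qed
    then show "x \<in> topspace T - V"
      using v(2) vG a(1) tp by simp
  qed
  moreover have "openin T (\<Union>a\<in>carrier G - V. a <#\<^bsub>G\<^esub> V)"
    using openin_l_coset[OF assms(1) _ assms(3)] by (intro openin_Union) blast
  ultimately show ?thesis
    unfolding closedin_def using openin_subset[OF assms(3)] by simp
qed

lemma open_subgroup_in_compact_open:
  assumes "topological_group G T" "openin T K" "compactin T K" "\<one> \<in> K"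
  obtains V where "subgroup V G" "openin T V" "V \<subseteq> K"
proof -
  have tp: "topspace T = carrier G"
    using assms(1) by (rule topspace_topological_group)
  have K: "K \<subseteq> carrier G"
    using openin_subset[OF assms(2)] tp by simp
  have mult: "continuous_map (prod_topology T T) T (\<lambda>(x, y). x \<otimes> y)"
    and inv: "continuous_map T T (\<lambda>x. inv x)"
    using assms(1) by (simp_all add: topological_group_def)
  define P where "P = {p \<in> topspace (prod_topology T T). (\<lambda>(x, y). x \<otimes> y) p \<in> K}"
  have P: "openin (prod_topology T T) P"
    unfolding P_def using mult assms(2) by (rule openin_continuous_map_preimage)
  have KP: "K \<times> {\<one>} \<subseteq> P"
    using K tp by (auto simp: P_def)
  have one: "\<one> \<in> topspace T"
    using tp by simp
  obtain U0 N where N: "openin T U0" "openin T N" "K \<subseteq> U0" "\<one> \<in> N" "U0 \<times> N \<subseteq> P"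
    using tube_lemma_left[OF P assms(3) one KP] by blast
  have KN: "k \<otimes> n \<in> K" if "k \<in> K" "n \<in> N" for k n
  proof -
    have "(k, n) \<in> P"
      using N(3,5) that by blast
    then show ?thesis
      by (simp add: P_def)
  qed
  define S where "S = N \<inter> {x \<in> topspace T. inv x \<in> N}"
  have "openin T {x \<in> topspace T. inv x \<in> N}"
    using inv N(2) by (rule openin_continuous_map_preimage)
  then have S: "openin T S" "\<one> \<in> S" "S \<subseteq> carrier G"
    unfolding S_def using N(2,4) openin_subset[OF N(2)] tp by auto
  have gen: "generate G S \<subseteq> carrier G"
    using generate_incl[OF S(3)] .
  have stable: "k \<otimes> x \<in> K" if "x \<in> generate G S" "k \<in> K" for x k
    using that
  proof (induction arbitrary: k)
    case one
    then have "k \<in> carrier G"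
      using K by blast
    with one show ?case
      by simp
  next
    case (incl h)
    then show ?case
      using KN by (simp add: S_def)
  next
    case (inv h)
    then show ?case
      using KN by (simp add: S_def)
  next
    case (eng h1 h2)
    have "k \<in> carrier G" "h1 \<in> carrier G" "h2 \<in> carrier G"
      using eng.prems eng.hyps K gen by blast+
    then have "k \<otimes> (h1 \<otimes> h2) = k \<otimes> h1 \<otimes> h2"
      by (simp add: m_assoc)
    then show ?case
      using eng.IH eng.prems by simp
  qed
  have "generate G S \<subseteq> K"
  proof
    fix x assume x: "x \<in> generate G S"
    then have "\<one> \<otimes> x \<in> K"
      using assms(4) by (rule stable)
    moreover have "x \<in> carrier G"
      using x gen by blast
    ultimately show "x \<in> K"
      by simp
  qed
  moreover have "S \<subseteq> generate G S"
    by (blast intro: generate.incl)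
  then have "openin T (generate G S)"
    by (rule openin_subgroup_if_nbhd[OF assms(1) generate_is_subgroup[OF S(3)] S(1,2)])
  ultimately show ?thesis
    using generate_is_subgroup[OF S(3)] that by blast
qed

lemma compact_open_subgroup_in_nbhd:
  assumes "tdlc_group G T" "openin T W" "\<one> \<in> W"
  obtains V where "subgroup V G" "openin T V" "compactin T V" "V \<subseteq> W"
proof -
  have tg: "topological_group G T"
    using assms(1) by (simp add: tdlc_group_def)
  obtain U where U: "openin T U" "compactin T U" "\<one> \<in> U" "U \<subseteq> W"
    using compact_open_nbhd_if_tdlc_group[OF assms] .
  obtain V where V: "subgroup V G" "openin T V" "V \<subseteq> U"
    using open_subgroup_in_compact_open[OF tg U(1-3)] .
  have "compactin T V"
    using closed_compactin[OF U(2) V(3) closedin_open_subgroup[OF tg V(1,2)]] .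
  with V U(4) that show ?thesis
    by blast
qed

lemma l_coset_eq_iff:
  assumes "subgroup K G" "a \<in> carrier G" "b \<in> carrier G"
  shows "a <#\<^bsub>G\<^esub> K = b <#\<^bsub>G\<^esub> K \<longleftrightarrow> inv a \<otimes> b \<in> K"
proof
  assume "a <#\<^bsub>G\<^esub> K = b <#\<^bsub>G\<^esub> K"
  then show "inv a \<otimes> b \<in> K"
    using lcos_self[OF assms(3,1)] subgroup.lcos_module_imp[OF assms(1) is_group assms(2)] by simp
next
  assume "inv a \<otimes> b \<in> K"
  then show "a <#\<^bsub>G\<^esub> K = b <#\<^bsub>G\<^esub> K"
    using l_repr_independence[OF _ assms(2,1)] subgroup.lcos_module_rev[OF assms(1) is_group assms(2,3)]
    by blast
qed

lemma finite_index_in_compactin: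
  assumes "topological_group G T" "compactin T A" "subgroup K G" "openin T K"
  shows "finite_index_in G K A"
proof -
  have A: "A \<subseteq> carrier G"
    using compactin_subset_topspace[OF assms(2)] topspace_topological_group[OF assms(1)] by simp
  have "\<exists>F. finite F \<and> F \<subseteq> (\<lambda>y. y <#\<^bsub>G\<^esub> K) ` A \<and> A \<subseteq> \<Union>F"
  proof (rule compactinD[OF assms(2)])
    show "openin T C" if "C \<in> (\<lambda>y. y <#\<^bsub>G\<^esub> K) ` A" for C
      using that openin_l_coset[OF assms(1) _ assms(4)] A by blast
    show "A \<subseteq> \<Union>((\<lambda>y. y <#\<^bsub>G\<^esub> K) ` A)"
      using A lcos_self[OF _ assms(3)] by blast
  qed
  then obtain F where F: "finite F" "F \<subseteq> (\<lambda>y. y <#\<^bsub>G\<^esub> K) ` A" "A \<subseteq> \<Union>F"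
    by blast
  \<comment> \<open>cosets are disjoint, so a subcover by cosets contains all of them\<close>
  have "(\<lambda>y. y <#\<^bsub>G\<^esub> K) ` A \<subseteq> F"
  proof
    fix C assume "C \<in> (\<lambda>y. y <#\<^bsub>G\<^esub> K) ` A"
    then obtain y where y: "y \<in> A" "C = y <#\<^bsub>G\<^esub> K"
      by blast
    then obtain C' where "C' \<in> F" "y \<in> C'"
      using F(3) by blast
    then obtain z where z: "z \<in> A" "z <#\<^bsub>G\<^esub> K \<in> F" "y \<in> z <#\<^bsub>G\<^esub> K"
      using F(2) by blast
    have "z <#\<^bsub>G\<^esub> K = y <#\<^bsub>G\<^esub> K"
      using l_repr_independence[OF z(3) _ assms(3)] z(1) A by blast
    then show "C \<in> F"
      using y(2) z(2) by simp
  qed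
  then show ?thesis
    unfolding finite_index_in_def using F(1) by (rule finite_subset)
qed

lemma commensurated_compact_open_subgroup:
  assumes "topological_group G T" "subgroup V G" "openin T V" "compactin T V"
  shows "commensurated G V"
  unfolding commensurated_def
proof (intro conjI ballI assms(2))
  fix g assume g: "g \<in> carrier G"
  have "subgroup (conj_set G g V \<inter> V) G"
    using subgroups_Inter_pair subgroup_conj_set assms(2) g by blast
  moreover have "openin T (conj_set G g V \<inter> V)"
    using openin_conj_set[OF assms(1) g assms(3)] assms(3) by blast
  ultimately show "finite_index_in G (conj_set G g V \<inter> V) V"
    and "finite_index_in G (conj_set G g V \<inter> V) (conj_set G g V)"
    using finite_index_in_compactin[OF assms(1)] compactin_conj_set[OF assms(1) g assms(4)] assms(4)
    by simp_all
qed

lemma closedin_subgroup_if_closedin_Int_open_subgroup: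
  assumes "topological_group G T" "subgroup L G" "subgroup V G" "openin T V" "closedin T (L \<inter> V)"
  shows "closedin T L"
proof -
  have tp: "topspace T = carrier G"
    using assms(1) by (rule topspace_topological_group)
  have closed_part: "closedin T ((x <#\<^bsub>G\<^esub> V) \<inter> L)" if x: "x \<in> carrier G" for x
  proof (cases "(x <#\<^bsub>G\<^esub> V) \<inter> L = {}")
    case True
    then show ?thesis
      by simp
  next
    case False
    then obtain l where l: "l \<in> L" "l \<in> (x <#\<^bsub>G\<^esub> V)"
      by blast
    have lG: "l \<in> carrier G"
      using l(1) subgroup.mem_carrier[OF assms(2)] by blast
    have "x <#\<^bsub>G\<^esub> V = l <#\<^bsub>G\<^esub> V"
      using l(2) x assms(3) by (rule l_repr_independence)
    moreover have "(l <#\<^bsub>G\<^esub> V) \<inter> L = l <#\<^bsub>G\<^esub> (L \<inter> V)"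
    proof (intro equalityI subsetI)
      fix y assume "y \<in> (l <#\<^bsub>G\<^esub> V) \<inter> L"
      then obtain v where v: "v \<in> V" "y = l \<otimes> v" "y \<in> L"
        unfolding l_coset_def by blast
      have "v = inv l \<otimes> y"
        using v(1,2) lG subgroup.mem_carrier[OF assms(3)] by simp
      then have "v \<in> L"
        using subgroup.m_closed[OF assms(2) subgroup.m_inv_closed[OF assms(2) l(1)] v(3)] by simp
      with v(1,2) show "y \<in> l <#\<^bsub>G\<^esub> (L \<inter> V)"
        unfolding l_coset_def by blast
    next
      fix y assume "y \<in> l <#\<^bsub>G\<^esub> (L \<inter> V)"
      then obtain v where "v \<in> L" "v \<in> V" "y = l \<otimes> v"
        unfolding l_coset_def by blast
      then show "y \<in> (l <#\<^bsub>G\<^esub> V) \<inter> L"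
        using subgroup.m_closed[OF assms(2) l(1)] unfolding l_coset_def by blast
    qed
    ultimately show ?thesis
      using closedin_l_coset[OF assms(1) lG assms(5)] by simp
  qed
  have "openin T (topspace T - L)"
  proof (subst openin_subopen, intro ballI)
    fix x assume x: "x \<in> topspace T - L"
    then have xG: "x \<in> carrier G"
      using tp by blast
    have "openin T ((x <#\<^bsub>G\<^esub> V) - (x <#\<^bsub>G\<^esub> V) \<inter> L)"
      using openin_l_coset[OF assms(1) xG assms(4)] closed_part[OF xG] by (rule openin_diff)
    moreover have "x \<in> (x <#\<^bsub>G\<^esub> V) - (x <#\<^bsub>G\<^esub> V) \<inter> L"
      using lcos_self[OF xG assms(3)] x by blast
    moreover have "(x <#\<^bsub>G\<^esub> V) - (x <#\<^bsub>G\<^esub> V) \<inter> L \<subseteq> topspace T - L"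
      using l_coset_subset_G[OF subgroup.subset[OF assms(3)] xG] tp by blast
    ultimately show "\<exists>N. openin T N \<and> x \<in> N \<and> N \<subseteq> topspace T - L"
      by blast
  qed
  then show ?thesis
    unfolding closedin_def using subgroup.subset[OF assms(2)] tp by simp
qed

lemma subset_one_if_subset_compact_open_subgroups:
  assumes "tdlc_group G T" "S \<subseteq> carrier G"
    and "\<And>V. subgroup V G \<Longrightarrow> openin T V \<Longrightarrow> compactin T V \<Longrightarrow> S \<subseteq> V"
  shows "S \<subseteq> {\<one>}"
proof
  fix y assume y: "y \<in> S"
  have tp: "topspace T = carrier G"
    using assms(1) topspace_topological_group[of G T] by (simp add: tdlc_group_def)
  show "y \<in> {\<one>}"
  proof (rule ccontr)
    assume "y \<notin> {\<one>}"
    then have one: "\<one> \<in> topspace T - {y}"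
      using tp by auto
    have "closedin T {y}"
      using closedin_Hausdorff_singleton[OF Hausdorff_space_if_tdlc_group[OF assms(1)]] y assms(2) tp
      by blast
    then have "openin T (topspace T - {y})"
      by (rule openin_diff[OF openin_topspace])
    then obtain V where "subgroup V G" "openin T V" "compactin T V" "V \<subseteq> topspace T - {y}"
      using compact_open_subgroup_in_nbhd[OF assms(1) _ one] by blast
    then show False
      using assms(3) y by blast
  qed
qed

end

context group_hom
begin

lemma subgroup_vimage:
  assumes "subgroup V H"
  shows "subgroup {x \<in> carrier G. h x \<in> V} G"
proof (rule G.subgroupI)
  show "{x \<in> carrier G. h x \<in> V} \<subseteq> carrier G"
    by blast
  have "\<one> \<in> {x \<in> carrier G. h x \<in> V}"
    using subgroup.one_closed[OF assms] by simp
  then show "{x \<in> carrier G. h x \<in> V} \<noteq> {}"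
    by blast
next
  fix a assume "a \<in> {x \<in> carrier G. h x \<in> V}"
  then show "inv a \<in> {x \<in> carrier G. h x \<in> V}"
    using subgroup.m_inv_closed[OF assms] by simp
next
  fix a b assume "a \<in> {x \<in> carrier G. h x \<in> V}" "b \<in> {x \<in> carrier G. h x \<in> V}"
  then show "a \<otimes> b \<in> {x \<in> carrier G. h x \<in> V}"
    using subgroup.m_closed[OF assms] by simp
qed

lemma finite_index_in_vimage:
  assumes "subgroup K H" "finite_index_in H K B" "A \<subseteq> carrier G" "h ` A \<subseteq> B"
  shows "finite_index_in G {x \<in> carrier G. h x \<in> K} A"
  unfolding finite_index_in_def
proof (rule finite_image_if_finite_image_finer)
  have "(\<lambda>x. h x <#\<^bsub>H\<^esub> K) ` A \<subseteq> (\<lambda>y. y <#\<^bsub>H\<^esub> K) ` B"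
    using assms(4) by blast
  then show "finite ((\<lambda>x. h x <#\<^bsub>H\<^esub> K) ` A)"
    using assms(2) unfolding finite_index_in_def by (rule finite_subset)
next
  fix x y assume xy: "x \<in> A" "y \<in> A" and eq: "h x <#\<^bsub>H\<^esub> K = h y <#\<^bsub>H\<^esub> K"
  have xG: "x \<in> carrier G" and yG: "y \<in> carrier G"
    using xy assms(3) by blast+
  have "inv\<^bsub>H\<^esub> (h x) \<otimes>\<^bsub>H\<^esub> h y \<in> K"
    using eq H.l_coset_eq_iff[OF assms(1)] xG yG by simp
  then have "inv x \<otimes> y \<in> {x \<in> carrier G. h x \<in> K}"
    using xG yG by simp
  then show "x <#\<^bsub>G\<^esub> {x \<in> carrier G. h x \<in> K} = y <#\<^bsub>G\<^esub> {x \<in> carrier G. h x \<in> K}"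
    using G.l_coset_eq_iff[OF subgroup_vimage[OF assms(1)] xG yG] by simp
qed

lemma conj_set_vimage:
  assumes "V \<subseteq> carrier H" "g \<in> carrier G"
  shows "conj_set G g {x \<in> carrier G. h x \<in> V} = {x \<in> carrier G. h x \<in> conj_set H (h g) V}"
proof -
  have "conj_set G g {x \<in> carrier G. h x \<in> V}
      = {x \<in> carrier G. inv g \<otimes> x \<otimes> g \<in> {x \<in> carrier G. h x \<in> V}}"
    by (rule G.conj_set_eq) (use assms(2) in auto)
  also have "\<dots> = {x \<in> carrier G. inv\<^bsub>H\<^esub> (h g) \<otimes>\<^bsub>H\<^esub> h x \<otimes>\<^bsub>H\<^esub> h g \<in> V}"
    using assms(2) by (simp cong: conj_cong)
  also have "\<dots> = {x \<in> carrier G. h x \<in> conj_set H (h g) V}"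
    using assms(2) by (simp add: H.conj_set_eq[OF assms(1)] cong: conj_cong)
  finally show ?thesis .
qed

lemma commensurated_vimage:
  assumes "commensurated H V"
  shows "commensurated G {x \<in> carrier G. h x \<in> V}"
  unfolding commensurated_def
proof (intro conjI ballI)
  let ?U = "{x \<in> carrier G. h x \<in> V}"
  have V: "subgroup V H"
    using assms by (simp add: commensurated_def)
  then show "subgroup ?U G"
    by (rule subgroup_vimage)
  fix g assume g: "g \<in> carrier G"
  let ?K = "conj_set H (h g) V \<inter> V"
  have K: "subgroup ?K H"
    using subgroups_Inter_pair H.subgroup_conj_set V g by simp
  have fin: "finite_index_in H ?K V" "finite_index_in H ?K (conj_set H (h g) V)"
    using assms g by (simp_all add: commensurated_def)
  have conj: "conj_set G g ?U = {x \<in> carrier G. h x \<in> conj_set H (h g) V}"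
    using conj_set_vimage[OF subgroup.subset[OF V] g] .
  then have eq: "conj_set G g ?U \<inter> ?U = {x \<in> carrier G. h x \<in> ?K}"
    by blast
  have "finite_index_in G {x \<in> carrier G. h x \<in> ?K} ?U"
    by (rule finite_index_in_vimage[OF K fin(1)]) auto
  then show "finite_index_in G (conj_set G g ?U \<inter> ?U) ?U"
    by (simp only: eq)
  have "finite_index_in G {x \<in> carrier G. h x \<in> ?K} (conj_set G g ?U)"
    by (rule finite_index_in_vimage[OF K fin(2)]) (auto simp: conj)
  then show "finite_index_in G (conj_set G g ?U \<inter> ?U) (conj_set G g ?U)"
    by (simp only: eq)
qed

lemma closedin_image_if_proper_commensurated_compact:
  assumes tG: "tdlc_group G TG"
    and proper_compact: "\<And>U. commensurated G U \<Longrightarrow> U \<noteq> carrier G \<Longrightarrow> openin TG U \<Longrightarrow> compactin TG U"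
    and tH: "tdlc_group H TH" and cont: "continuous_map TG TH h"
  shows "closedin TH (h ` carrier G)"
proof -
  have tgH: "topological_group H TH"
    using tH by (simp add: tdlc_group_def)
  have hs: "Hausdorff_space TH"
    using tH by (rule H.Hausdorff_space_if_tdlc_group)
  show ?thesis
  proof (cases "\<exists>V. subgroup V H \<and> openin TH V \<and> compactin TH V \<and> \<not> h ` carrier G \<subseteq> V")
    case False
    have "h ` carrier G \<subseteq> {\<one>\<^bsub>H\<^esub>}"
    proof (rule H.subset_one_if_subset_compact_open_subgroups[OF tH])
      show "h ` carrier G \<subseteq> carrier H"
        by auto
      show "h ` carrier G \<subseteq> V" if "subgroup V H" "openin TH V" "compactin TH V" for V
        using False that by blast
    qed
    moreover have "h \<one> \<in> h ` carrier G"
      by (rule imageI[OF G.one_closed])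
    then have "\<one>\<^bsub>H\<^esub> \<in> h ` carrier G"
      by simp
    ultimately have "h ` carrier G = {\<one>\<^bsub>H\<^esub>}"
      by blast
    moreover have "\<one>\<^bsub>H\<^esub> \<in> topspace TH"
      using topspace_topological_group[OF tgH] by simp
    ultimately show ?thesis
      using closedin_Hausdorff_singleton[OF hs] by simp
  next
    case True
    then obtain V where V: "subgroup V H" "openin TH V" "compactin TH V" "\<not> h ` carrier G \<subseteq> V"
      by blast
    let ?U = "{x \<in> carrier G. h x \<in> V}"
    have "commensurated G ?U"
      using commensurated_vimage[OF H.commensurated_compact_open_subgroup[OF tgH V(1-3)]] .
    moreover have "?U \<noteq> carrier G"
      using V(4) by blast
    moreover have "openin TG ?U"
      using openin_continuous_map_preimage[OF cont V(2)] topspace_topological_group[of G TG] tG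
      by (simp add: tdlc_group_def)
    ultimately have "compactin TG ?U"
      by (rule proper_compact)
    then have "compactin TH (h ` ?U)"
      using cont by (rule image_compactin)
    moreover have "h ` ?U = h ` carrier G \<inter> V"
      by blast
    ultimately have "compactin TH (h ` carrier G \<inter> V)"
      by simp
    then have "closedin TH (h ` carrier G \<inter> V)"
      by (rule compactin_imp_closedin[OF hs])
    moreover have "subgroup (h ` carrier G) H"
      using subgroup_img_is_subgroup[OF G.subgroup_self] .
    ultimately show ?thesis
      using H.closedin_subgroup_if_closedin_Int_open_subgroup[OF tgH _ V(1,2)] by blast
  qed
qed

end

theorem mainTheorem18:
  fixes G :: "('a, 'm) monoid_scheme" and TG :: "'a topology"
  assumes "tdlc_group G TG"
    and "\<forall>U. commensurated G U \<and> U \<noteq> carrier G \<and> openin TG U \<longrightarrow> compactin TG U"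
  shows "\<forall>(H :: ('b, 'n) monoid_scheme) (TH :: 'b topology) (\<phi> :: 'a \<Rightarrow> 'b).
           tdlc_group H TH \<and> \<phi> \<in> hom G H \<and> continuous_map TG TH \<phi>
           \<longrightarrow> closedin TH (\<phi> ` carrier G)"
proof (intro allI impI)
  fix H :: "('b, 'n) monoid_scheme" and TH :: "'b topology" and \<phi> :: "'a \<Rightarrow> 'b"
  assume H: "tdlc_group H TH \<and> \<phi> \<in> hom G H \<and> continuous_map TG TH \<phi>"
  then have "group_hom G H \<phi>"
    using assms(1) by (simp add: group_hom_def group_hom_axioms_def tdlc_group_def topological_group_def)
  then show "closedin TH (\<phi> ` carrier G)"
    using assms H by (simp add: group_hom.closedin_image_if_proper_commensurated_compact)
qed

end
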